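(* Let $S=s_1,\ldots,s_n$ be a sequence of positive real numbers, $\gamma>0$, $k$ a positive integer. Let $(L,\alpha,\beta)$ be an optimal solution of $\textsc{Exp}$ for $S,\gamma,k$, with $L=\ell_1,\ldots,\ell_n$, and let $g=(\prod_{i=1}^ns_i)^{1/n}$. Then \[ \sum_{i=1}^n\big(-\log\beta-\ell_i\log\alpha\big)\ge n\log g. \]
   Context: A level sequence is $L=\ell_1,\ldots,\ell_n$ of integers with $0\le\ell_i\le k$; set $\ell_0=0$. The penalty is $\mathrm{pen}(x,y)=\max(y-x,0)\,\gamma\log n$; $p_{\exp}(s;\lambda)=\lambda e^{-\lambda s}$; $\mathrm{score}_{\exp}(L,S;\alpha,\beta,\gamma)=\sum_{i=1}^n\big[-\log p_{\exp}(s_i;\beta\alpha^{\ell_i})+\mathrm{pen}(\ell_{i-1},\ell_i)\big]$. Problem $\textsc{Exp}$: given $S,\gamma,k$, find $L$ and parameters $\alpha>1$, $\beta>0$ minimizing this score. The paper assumes $s_i>0$ for this problem. *)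

theory Defs
  imports Complex_Main
begin

(* Level sequence L : nat => nat, meaningful on indices 1..n; convention l_0 = 0. *)
definition lev :: "(nat \<Rightarrow> nat) \<Rightarrow> nat \<Rightarrow> nat" where
  "lev L j = (if j = 0 then 0 else L j)"

definition pen :: "nat \<Rightarrow> real \<Rightarrow> nat \<Rightarrow> nat \<Rightarrow> real" where
  "pen n \<gamma> x y = max (real y - real x) 0 * \<gamma> * ln (real n)"

definition p_exp :: "real \<Rightarrow> real \<Rightarrow> real" where
  "p_exp s lam = lam * exp (- lam * s)"

definition score_exp ::
  "nat \<Rightarrow> (nat \<Rightarrow> real) \<Rightarrow> (nat \<Rightarrow> nat) \<Rightarrow> real \<Rightarrow> real \<Rightarrow> real \<Rightarrow> real" where
  "score_exp n S L \<alpha> \<beta> \<gamma> =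
     (\<Sum>i=1..n. - ln (p_exp (S i) (\<beta> * \<alpha> ^ lev L i)) + pen n \<gamma> (lev L (i - 1)) (lev L i))"

definition valid_levels :: "nat \<Rightarrow> nat \<Rightarrow> (nat \<Rightarrow> nat) \<Rightarrow> bool" where
  "valid_levels n k L = (\<forall>i\<in>{1..n}. L i \<le> k)"

definition optimal_exp ::
  "nat \<Rightarrow> (nat \<Rightarrow> real) \<Rightarrow> real \<Rightarrow> nat \<Rightarrow> (nat \<Rightarrow> nat) \<Rightarrow> real \<Rightarrow> real \<Rightarrow> bool" where
  "optimal_exp n S \<gamma> k L \<alpha> \<beta> =
     (valid_levels n k L \<and> \<alpha> > 1 \<and> \<beta> > 0 \<and>
      (\<forall>L' \<alpha>' \<beta>'. valid_levels n k L' \<longrightarrow> \<alpha>' > 1 \<longrightarrow> \<beta>' > 0 \<longrightarrow>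
          score_exp n S L \<alpha> \<beta> \<gamma> \<le> score_exp n S L' \<alpha>' \<beta>' \<gamma>))"

end

theory Submission
  imports Defs
begin

text \<open>For fixed levels and \<open>\<alpha>\<close>, the score is \<open>\<beta> U - n ln \<beta>\<close> plus a term independent of
  \<open>\<beta>\<close>, where \<open>U\<close> is the sum of the \<open>\<alpha> ^ \<ell>\<^sub>i * s\<^sub>i\<close>. Optimality in \<open>\<beta>\<close> alone forces
  \<open>\<beta> U = n\<close>, i.e. the numbers \<open>\<beta> * \<alpha> ^ \<ell>\<^sub>i * s\<^sub>i\<close> have mean 1. By \<open>ln x \<le> x - 1\<close> their
  logarithms sum to at most 0, which rearranges to the claim.\<close>

lemma neg_ln_p_exp: "lam > 0 \<Longrightarrow> - ln (p_exp s lam) = lam * s - ln lam"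
  by (simp add: p_exp_def ln_mult)

lemma score_exp_eq:
  assumes "a > 0" "b > 0"
  shows "score_exp n S L a b g = b * (\<Sum>i=1..n. a ^ L i * S i) - real n * ln b
           + (\<Sum>i=1..n. pen n g (lev L (i - 1)) (lev L i) - real (L i) * ln a)"
proof -
  have "score_exp n S L a b g
      = (\<Sum>i=1..n. b * (a ^ L i * S i) - ln b + (pen n g (lev L (i - 1)) (lev L i) - real (L i) * ln a))"
    unfolding score_exp_def
    by (intro sum.cong refl) (use assms in \<open>auto simp: neg_ln_p_exp lev_def ln_mult ln_realpow\<close>)
  then show ?thesis
    by (simp add: sum.distrib sum_subtractf sum_distrib_left)
qed

lemma minimizer_linear_minus_ln:
  fixes c U x :: real
  assumes "c > 0" "U > 0" "x > 0"
    and min: "\<And>y. y > 0 \<Longrightarrow> x * U - c * ln x \<le> y * U - c * ln y"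
  shows "x * U = c"
proof -
  define t where "t = x * U / c"
  have t_pos: "t > 0" using assms by (simp add: t_def)
  have "x * U - c * ln x \<le> (c / U) * U - c * ln (c / U)"
    using min assms by (intro min) simp
  moreover have "c * ln t = c * ln x + c * ln U - c * ln c"
    using assms by (simp add: t_def ln_div ln_mult algebra_simps)
  moreover have "x * U = c * t" using assms by (simp add: t_def)
  ultimately have "c * (t - 1) \<le> c * ln t"
    using assms by (simp add: ln_div right_diff_distrib)
  then have "t - 1 \<le> ln t" using assms by simp
  with ln_le_minus_one[OF t_pos] have "ln t = t - 1" by linarith
  then have "t = 1" using ln_eq_minus_one[OF t_pos] by simp
  then show ?thesis using assms by (simp add: t_def)
qed

lemma sum_ln_nonpos_of_sum_le_card:
  fixes x :: "'a \<Rightarrow> real"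
  assumes "\<And>i. i \<in> A \<Longrightarrow> x i > 0" and "sum x A \<le> real (card A)"
  shows "(\<Sum>i\<in>A. ln (x i)) \<le> 0"
proof -
  have "(\<Sum>i\<in>A. ln (x i)) \<le> (\<Sum>i\<in>A. x i - 1)"
    using assms(1) by (intro sum_mono ln_le_minus_one) auto
  also have "\<dots> = sum x A - real (card A)"
    by (simp add: sum_subtractf)
  finally show ?thesis using assms(2) by simp
qed

lemma card_mult_ln_geometric_mean:
  fixes x :: "'a \<Rightarrow> real"
  assumes "finite A" "A \<noteq> {}" "\<And>i. i \<in> A \<Longrightarrow> x i > 0"
  shows "real (card A) * ln ((\<Prod>i\<in>A. x i) powr (1 / real (card A))) = (\<Sum>i\<in>A. ln (x i))"
proof -
  have "(\<Prod>i\<in>A. x i) > 0" using assms(3) by (intro prod_pos) auto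
  moreover have "card A > 0" using assms(1,2) by (simp add: card_gt_0_iff)
  ultimately show ?thesis
    using assms by (simp add: ln_powr ln_prod less_imp_neq[symmetric])
qed

theorem lemma9:
  fixes n k :: nat and S :: "nat \<Rightarrow> real" and \<gamma> \<alpha> \<beta> :: real and L :: "nat \<Rightarrow> nat"
  assumes "n \<ge> 1" and "\<forall>i\<in>{1..n}. S i > 0" and "\<gamma> > 0" and "k \<ge> 1"
    and "optimal_exp n S \<gamma> k L \<alpha> \<beta>"
  shows "(\<Sum>i=1..n. - ln \<beta> - real (L i) * ln \<alpha>)
           \<ge> real n * ln ((\<Prod>i=1..n. S i) powr (1 / real n))"
proof -
  have \<alpha>: "\<alpha> > 1" and \<beta>: "\<beta> > 0"
    and opt: "\<And>b. b > 0 \<Longrightarrow> score_exp n S L \<alpha> \<beta> \<gamma> \<le> score_exp n S L \<alpha> b \<gamma>"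
    using assms(5) unfolding optimal_exp_def by auto
  define U where "U = (\<Sum>i=1..n. \<alpha> ^ L i * S i)"
  have "U > 0" unfolding U_def using assms(1,2) \<alpha> by (intro sum_pos) auto
  have "\<beta> * U = real n"
    using assms(1) \<open>U > 0\<close> \<beta>
    by (intro minimizer_linear_minus_ln) (use opt \<alpha> in \<open>auto simp: score_exp_eq U_def\<close>)
  then have "(\<Sum>i=1..n. ln (\<beta> * (\<alpha> ^ L i * S i))) \<le> 0"
    using assms(2) \<alpha> \<beta>
    by (intro sum_ln_nonpos_of_sum_le_card) (auto simp: U_def sum_distrib_left)
  moreover have "(\<Sum>i=1..n. ln (\<beta> * (\<alpha> ^ L i * S i)))
      = (\<Sum>i=1..n. ln \<beta> + real (L i) * ln \<alpha>) + (\<Sum>i=1..n. ln (S i))"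
    unfolding sum.distrib[symmetric]
    by (intro sum.cong refl) (use assms(2) \<alpha> \<beta> in \<open>force simp: ln_mult ln_realpow\<close>)
  moreover have "real n * ln ((\<Prod>i=1..n. S i) powr (1 / real n)) = (\<Sum>i=1..n. ln (S i))"
    using card_mult_ln_geometric_mean[of "{1..n}" S] assms(1,2) by simp
  ultimately show ?thesis
    by (simp add: sum_subtractf sum_negf sum.distrib)
qed

end
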